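(* Let $\Omega$ be a Polish space and $(T(t))_{t\ge0}\subset\mathscr{L}(\mathscr{M}(\Omega),\sigma)$ a Markovian semigroup with transition kernels $k_t$. If it is $t_0$-regular for some $t_0>0$, then it is $s$-regular for every $s\ge t_0$, and moreover the measures $k_s(x,\cdot)$ and $k_t(y,\cdot)$ are equivalent for all $s,t\ge t_0$ and all $x,y\in\Omega$.
   Context: $\mathscr{M}(\Omega)$: finite signed Borel measures. A weakly continuous operator is one of the form $(T\mu)(A)=\int k(x,A)\,d\mu(x)$ with $k$ a bounded transition kernel (map $\Omega\times\mathscr{B}(\Omega)\to\mathbb{R}$, signed measure in the second variable, Borel measurable in the first, $\sup_x\lvert k\rvert(x,\Omega)<\infty$); $\mathscr{L}(\mathscr{M}(\Omega),\sigma)$ is the space of such operators. A semigroup $(T(t))_{t\ge0}$ satisfies $T(0)=I$ and $T(t+s)=T(t)T(s)$; $k_t$ denotes the kernel of $T(t)$. It is Markovian if each $k_t(x,\cdot)$ is a probability measure. For $t_0>0$ it is $t_0$-regular if $k_{t_0}(x,\cdot)$ and $k_{t_0}(y,\cdot)$ are equivalent (mutually absolutely continuous) for all $x,y\in\Omega$. *)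

theory Defs
  imports "HOL-Probability.Probability"
begin

text \<open>A Markovian semigroup of weakly continuous operators is given by its kernels
  k t (t \<ge> 0): every k t x is a Borel probability measure, x \<mapsto> k t x A
  is Borel measurable, T(0) = I (i.e. k 0 x is the Dirac measure at x) and
  T(t+s) = T(t)T(s), which in terms of kernels is the Chapman-Kolmogorov
  identity k (t+s) x A = \<integral> k t z A d(k s x)(z).\<close>

definition markov_kernel_semigroup :: "(real \<Rightarrow> 'a::topological_space \<Rightarrow> 'a measure) \<Rightarrow> bool" where
  "markov_kernel_semigroup k \<longleftrightarrow>
     (\<forall>t\<ge>0. \<forall>x. sets (k t x) = sets borel \<and> prob_space (k t x)) \<and>
     (\<forall>t\<ge>0. \<forall>A\<in>sets borel. (\<lambda>x. measure (k t x) A) \<in> borel_measurable borel) \<and>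
     (\<forall>x. k 0 x = return borel x) \<and>
     (\<forall>t\<ge>0. \<forall>s\<ge>0. \<forall>x. \<forall>A\<in>sets borel.
        measure (k (t + s) x) A = (\<integral>z. measure (k t z) A \<partial>(k s x)))"

definition equiv_measures :: "'a measure \<Rightarrow> 'a measure \<Rightarrow> bool" where
  "equiv_measures M N \<longleftrightarrow> absolutely_continuous M N \<and> absolutely_continuous N M"

definition regular_at :: "(real \<Rightarrow> 'a \<Rightarrow> 'a measure) \<Rightarrow> real \<Rightarrow> bool" where
  "regular_at k t0 \<longleftrightarrow> (\<forall>x y. equiv_measures (k t0 x) (k t0 y))"

end

theory Submission
  imports Defs
begin

text \<open>Write \<open>t = t0 + r\<close> with \<open>r \<ge> 0\<close>. By Chapman-Kolmogorov,
  \<open>k t x A = \<integral> k t0 z A d(k r x)(z)\<close>, and by \<open>t0\<close>-regularity the integrand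
  either vanishes everywhere or nowhere. Since \<open>k r x\<close> is a probability measure,
  the integral vanishes exactly when the integrand does, so \<open>k t x\<close> has the same
  null sets as every \<open>k t0 y\<close>.\<close>

lemma prob_space_null_sets_iff:
  assumes "prob_space M"
  shows "A \<in> null_sets M \<longleftrightarrow> A \<in> sets M \<and> measure M A = 0"
  using assms by (auto simp: prob_space_def finite_measure.emeasure_eq_measure)

lemma equiv_measures_iff_null_sets:
  "equiv_measures M N \<longleftrightarrow> null_sets M = null_sets N"
  unfolding equiv_measures_def absolutely_continuous_def by blast

lemma equiv_prob_spacesI:
  assumes "prob_space M" "prob_space N" "sets M = sets N"
    and "\<And>A. A \<in> sets M \<Longrightarrow> measure M A = 0 \<longleftrightarrow> measure N A = 0"
  shows "equiv_measures M N"
  unfolding equiv_measures_iff_null_sets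
  using assms by (auto simp: prob_space_null_sets_iff)

lemma equiv_prob_spacesD:
  assumes "equiv_measures M N" "prob_space M" "prob_space N" "sets M = sets N"
    and "A \<in> sets M"
  shows "measure M A = 0 \<longleftrightarrow> measure N A = 0"
proof -
  have "A \<in> null_sets M \<longleftrightarrow> A \<in> null_sets N"
    using assms(1) by (simp add: equiv_measures_iff_null_sets)
  then show ?thesis
    using assms(2-5) by (simp add: prob_space_null_sets_iff)
qed

lemma prob_space_integral_eq_0_iff:
  fixes f :: "'a \<Rightarrow> real"
  assumes "prob_space M" "f \<in> borel_measurable M" "\<And>z. 0 \<le> f z" "\<And>z. f z \<le> 1"
    and zeros_uniform: "\<And>z w. f z = 0 \<longleftrightarrow> f w = 0"
  shows "(\<integral>z. f z \<partial>M) = 0 \<longleftrightarrow> f y = 0"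
proof
  assume "(\<integral>z. f z \<partial>M) = 0"
  moreover have "integrable M f"
  proof (rule finite_measure.integrable_const_bound[where B = 1])
    show "finite_measure M"
      using assms(1) by (simp add: prob_space_def)
  qed (simp_all add: abs_of_nonneg assms(2-4))
  ultimately have "AE z in M. f z = 0"
    by (simp add: integral_nonneg_eq_0_iff_AE assms(3))
  then have "AE z in M. False" if "\<forall>z. f z \<noteq> 0"
    by (rule AE_mp) (use that in blast)
  then obtain z where "f z = 0"
    using prob_space.AE_False[OF assms(1)] by blast
  then show "f y = 0"
    using zeros_uniform[of y z] by simp
next
  assume "f y = 0"
  then have "f z = 0" for z
    using zeros_uniform[of z y] by simp
  then show "(\<integral>z. f z \<partial>M) = 0"
    by simp
qed

context
  fixes k :: "real \<Rightarrow> 'a::topological_space \<Rightarrow> 'a measure"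
  assumes semigroup: "markov_kernel_semigroup k"
begin

lemma markov_kernel_prob_space: "t \<ge> 0 \<Longrightarrow> prob_space (k t x)"
  using semigroup unfolding markov_kernel_semigroup_def by blast

lemma markov_kernel_sets: "t \<ge> 0 \<Longrightarrow> sets (k t x) = sets borel"
  using semigroup unfolding markov_kernel_semigroup_def by blast

lemma markov_kernel_measurable:
  "t \<ge> 0 \<Longrightarrow> A \<in> sets borel \<Longrightarrow> (\<lambda>x. measure (k t x) A) \<in> borel_measurable borel"
  using semigroup unfolding markov_kernel_semigroup_def by blast

lemma markov_kernel_chapman_kolmogorov:
  "t \<ge> 0 \<Longrightarrow> s \<ge> 0 \<Longrightarrow> A \<in> sets borel \<Longrightarrow>
    measure (k (t + s) x) A = (\<integral>z. measure (k t z) A \<partial>(k s x))"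
  using semigroup unfolding markov_kernel_semigroup_def by blast

lemma regular_at_null_iff:
  assumes "regular_at k t0" "t0 \<ge> 0" "A \<in> sets borel"
  shows "measure (k t0 x) A = 0 \<longleftrightarrow> measure (k t0 y) A = 0"
proof (rule equiv_prob_spacesD)
  show "equiv_measures (k t0 x) (k t0 y)"
    using assms(1) by (simp add: regular_at_def)
qed (simp_all add: markov_kernel_prob_space markov_kernel_sets assms(2,3))

lemma null_iff_null_at_regular_time:
  assumes "regular_at k t0" "t0 \<ge> 0" "t \<ge> t0" "A \<in> sets borel"
  shows "measure (k t x) A = 0 \<longleftrightarrow> measure (k t0 y) A = 0"
proof -
  define r where "r = t - t0"
  have "r \<ge> 0"
    using assms(3) by (simp add: r_def)
  have "measure (k t x) A = (\<integral>z. measure (k t0 z) A \<partial>(k r x))"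
    using markov_kernel_chapman_kolmogorov[OF \<open>t0 \<ge> 0\<close> \<open>r \<ge> 0\<close> \<open>A \<in> sets borel\<close>]
    by (simp add: r_def)
  also have "\<dots> = 0 \<longleftrightarrow> measure (k t0 y) A = 0"
  proof (rule prob_space_integral_eq_0_iff)
    show "prob_space (k r x)"
      using \<open>r \<ge> 0\<close> by (rule markov_kernel_prob_space)
    show "(\<lambda>z. measure (k t0 z) A) \<in> borel_measurable (k r x)"
      using markov_kernel_measurable[OF \<open>t0 \<ge> 0\<close> \<open>A \<in> sets borel\<close>]
      by (simp add: measurable_cong_sets[OF markov_kernel_sets[OF \<open>r \<ge> 0\<close>] refl])
    show "measure (k t0 z) A \<le> 1" for z
      using markov_kernel_prob_space[OF \<open>t0 \<ge> 0\<close>] by (rule prob_space.prob_le_1)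
    show "measure (k t0 z) A = 0 \<longleftrightarrow> measure (k t0 w) A = 0" for z w
      using assms(1,2,4) by (rule regular_at_null_iff)
  qed simp
  finally show ?thesis .
qed

lemma equiv_measures_after_regular_time:
  assumes "regular_at k t0" "t0 \<ge> 0" "s \<ge> t0" "t \<ge> t0"
  shows "equiv_measures (k s x) (k t y)"
proof (rule equiv_prob_spacesI)
  show "prob_space (k s x)" "prob_space (k t y)" "sets (k s x) = sets (k t y)"
    using assms(2-4) by (simp_all add: markov_kernel_prob_space markov_kernel_sets)
  fix A
  assume "A \<in> sets (k s x)"
  then have "A \<in> sets borel"
    using assms(2,3) markov_kernel_sets by simp
  then show "measure (k s x) A = 0 \<longleftrightarrow> measure (k t y) A = 0"
    using null_iff_null_at_regular_time[OF assms(1,2,3)]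
      null_iff_null_at_regular_time[OF assms(1,2,4)] by blast
qed

end

theorem mainTheorem10:
  fixes k :: "real \<Rightarrow> 'a::polish_space \<Rightarrow> 'a measure" and t0 :: real
  assumes "markov_kernel_semigroup k"
    and "t0 > 0"
    and "regular_at k t0"
  shows "(\<forall>s\<ge>t0. regular_at k s) \<and>
         (\<forall>s t x y. s \<ge> t0 \<longrightarrow> t \<ge> t0 \<longrightarrow> equiv_measures (k s x) (k t y))"
proof -
  have "equiv_measures (k s x) (k t y)" if "s \<ge> t0" "t \<ge> t0" for s t x y
    using assms(1,3) \<open>t0 > 0\<close> that by (intro equiv_measures_after_regular_time) auto
  then show ?thesis
    unfolding regular_at_def by blast
qed

end
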